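(* Let $Z$ be a continuous random variable with density $f$, CDF $F$, finite expectation, and support unbounded on the right. Let $\alpha\in[0,1)$ and suppose $h_\alpha(z)\le C$ for all $z\in\mathbb{R}$. Run GBPA with the stochastically smoothed potential $\tilde\Phi$ with perturbation $Z$. Then for every gain sequence $g_1,\dots,g_T\in[-1,0]^N$ and every round $t$, $$\mathbb{E}\big[D_{\tilde\Phi}(\hat G_t,\hat G_{t-1}) \,\big|\, i_1,\dots,i_{t-1}\big] \le \frac{2C}{1-\alpha}\, N.$$
   Context: Generalized hazard rate: for $\alpha\in[0,1)$, $h_\alpha(z) = \frac{f(z)|z|^\alpha}{(1-F(z))^{1-\alpha}}$. Adversarial multi-armed bandit: $N$ arms, $T$ rounds; an oblivious adversary fixes $g_1,\dots,g_T \in [-1,0]^N$ in advance. The stochastically smoothed potential is $\tilde\Phi(G) = \mathbb{E}[\max_{i}(G_i + Z_i)]$ for $G\in\mathbb{R}^N$, $Z_1,\dots,Z_N$ i.i.d. copies of $Z$; $\nabla_i\tilde\Phi(G) = \mathbb{P}(i = \arg\max_j (G_j+Z_j))$. GBPA$(\tilde\Phi)$: $\hat G_0 = 0$; for $t=1,\dots,T$: $p_t = \nabla\tilde\Phi(\hat G_{t-1})$, draw $i_t \sim p_t$, observe only $g_{t,i_t}$, set $\hat g_t = \frac{g_{t,i_t}}{p_{t,i_t}} e_{i_t}$, $\hat G_t = \hat G_{t-1} + \hat g_t$. Bregman divergence: $D_{\tilde\Phi}(x,y) = \tilde\Phi(x)-\tilde\Phi(y)-\langle\nabla\tilde\Phi(y),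 x-y\rangle$. *)

theory Defs
  imports "HOL-Probability.Probability"
begin

definition Zdist :: "(real \<Rightarrow> real) \<Rightarrow> real measure" where
  "Zdist f = density lborel (\<lambda>x. ennreal (f x))"

definition cdf_of :: "(real \<Rightarrow> real) \<Rightarrow> real \<Rightarrow> real" where
  "cdf_of f z = measure (Zdist f) {..z}"

text \<open>|z|^a with the convention 0^0 = 1 (Isabelle's powr has 0 powr 0 = 0).\<close>
definition abs_pow :: "real \<Rightarrow> real \<Rightarrow> real" where
  "abs_pow z a = (if z = 0 \<and> a = 0 then 1 else \<bar>z\<bar> powr a)"

definition hazard_rate :: "(real \<Rightarrow> real) \<Rightarrow> real \<Rightarrow> real \<Rightarrow> real" where
  "hazard_rate f \<alpha> z = f z * abs_pow z \<alpha> / (1 - cdf_of f z) powr (1 - \<alpha>)"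

text \<open>Joint law of N i.i.d. copies Z_0, ..., Z_(N-1) (arms are 0..N-1).\<close>
definition Zjoint :: "(real \<Rightarrow> real) \<Rightarrow> nat \<Rightarrow> (nat \<Rightarrow> real) measure" where
  "Zjoint f N = PiM {..<N} (\<lambda>_. Zdist f)"

definition Phi :: "(real \<Rightarrow> real) \<Rightarrow> nat \<Rightarrow> (nat \<Rightarrow> real) \<Rightarrow> real" where
  "Phi f N G = (\<integral>\<omega>. Max ((\<lambda>i. G i + \<omega> i) ` {..<N}) \<partial>Zjoint f N)"

text \<open>grad_i Phi(G) = P(i = argmax_j (G_j + Z_j)).\<close>
definition grad :: "(real \<Rightarrow> real) \<Rightarrow> nat \<Rightarrow> (nat \<Rightarrow> real) \<Rightarrow> nat \<Rightarrow> real" where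
  "grad f N G i = measure (Zjoint f N)
     {\<omega> \<in> space (Zjoint f N). \<forall>j<N. j \<noteq> i \<longrightarrow> G j + \<omega> j < G i + \<omega> i}"

definition bregman :: "(real \<Rightarrow> real) \<Rightarrow> nat \<Rightarrow> (nat \<Rightarrow> real) \<Rightarrow> (nat \<Rightarrow> real) \<Rightarrow> real" where
  "bregman f N x y = Phi f N x - Phi f N y - (\<Sum>i<N. grad f N y i * (x i - y i))"

text \<open>GBPA estimate hat G_s after rounds 1..s, given the gains g (g t i = g_{t,i},
  rounds numbered from 1) and the list of chosen arms hs = [i_1, i_2, ...].\<close>
fun Ghat :: "(real \<Rightarrow> real) \<Rightarrow> nat \<Rightarrow> (nat \<Rightarrow> nat \<Rightarrow> real) \<Rightarrow> nat list \<Rightarrow> nat \<Rightarrow> (nat \<Rightarrow> real)" where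
  "Ghat f N g hs 0 = (\<lambda>_. 0)"
| "Ghat f N g hs (Suc s) =
     (let G = Ghat f N g hs s; i = hs ! s
      in G(i := G i + g (Suc s) i / grad f N G i))"

definition hist_prob :: "(real \<Rightarrow> real) \<Rightarrow> nat \<Rightarrow> (nat \<Rightarrow> nat \<Rightarrow> real) \<Rightarrow> nat list \<Rightarrow> real" where
  "hist_prob f N g hs = (\<Prod>s<length hs. grad f N (Ghat f N g hs s) (hs ! s))"

text \<open>E[ D(hat G_t, hat G_(t-1)) | i_1..i_(t-1) = hs ]: i_t is drawn from p_t = grad Phi(hat G_(t-1)).\<close>
definition cond_exp_bregman :: "(real \<Rightarrow> real) \<Rightarrow> nat \<Rightarrow> (nat \<Rightarrow> nat \<Rightarrow> real) \<Rightarrow> nat \<Rightarrow> nat list \<Rightarrow> real" where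
  "cond_exp_bregman f N g t hs =
     (let G = Ghat f N g hs (t - 1)
      in (\<Sum>i<N. grad f N G i * bregman f N (G(i := G i + g t i / grad f N G i)) G))"

end

theory Submission
  imports Defs
begin

text \<open>
  Moving the estimate of arm \<open>i\<close> down by \<open>r = -g/p\<close> (where \<open>p\<close> is the probability of
  playing \<open>i\<close>) lowers \<open>max\<^sub>j (G\<^sub>j + Z\<^sub>j)\<close> by \<open>r\<close> whenever \<open>i\<close> leads by a margin larger than
  \<open>r\<close>, and never raises it; so the divergence is at most \<open>r\<close> times the probability that
  \<open>i\<close> leads by a margin in \<open>(0, r]\<close>. Conditionally on the other coordinates this asks
  \<open>Z\<^sub>i\<close> to fall into an interval of length \<open>r\<close> above a threshold \<open>a\<close>, and the hazard bound
  gives \<open>P(a < Z \<le> a + r) \<le> 2C/(1-\<alpha>) r^(1-\<alpha>) P(Z > a)^(1-\<alpha>)\<close>. Averaging over the other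
  coordinates with the concavity of \<open>t \<mapsto> t^(1-\<alpha>)\<close> turns \<open>P(Z > a)\<close> into \<open>p\<close>, so the
  weighted divergence of arm \<open>i\<close> is at most \<open>2C/(1-\<alpha>) (rp)^(2-\<alpha>) \<le> 2C/(1-\<alpha>)\<close>, since
  \<open>rp = -g \<le> 1\<close>. Summing over the \<open>N\<close> arms gives the bound.
\<close>

lemma space_Zdist [simp]: "space (Zdist f) = UNIV"
  and sets_Zdist [simp, measurable_cong]: "sets (Zdist f) = sets borel"
  by (simp_all add: Zdist_def)

lemma survival_eq_measure:
  assumes "prob_space (Zdist f)"
  shows "1 - cdf_of f a = measure (Zdist f) {a<..}"
proof -
  interpret prob_space "Zdist f" by fact
  have "measure (Zdist f) {a<..} = prob (space (Zdist f) - {..a})"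
    by (rule arg_cong[where f="measure (Zdist f)"]) auto
  also have "\<dots> = 1 - prob {..a}" by (rule prob_compl) simp
  finally show ?thesis by (simp add: cdf_of_def)
qed

lemma hazard_rate_nonneg:
  assumes "\<And>x. f x \<ge> 0"
  shows "0 \<le> hazard_rate f \<alpha> z"
  using assms unfolding hazard_rate_def abs_pow_def by auto

lemma density_le_hazard_bound:
  assumes f_nonneg: "\<And>x. f x \<ge> 0"
    and f_prob: "prob_space (Zdist f)"
    and unbounded_right: "\<And>z. cdf_of f z < 1"
    and alpha: "\<alpha> \<le> 1"
    and hazard: "\<And>z. hazard_rate f \<alpha> z \<le> C"
    and y: "y \<noteq> 0" "a \<le> y"
  shows "f y \<le> C * (1 - cdf_of f a) powr (1 - \<alpha>) * \<bar>y\<bar> powr (- \<alpha>)"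
proof -
  have C: "0 \<le> C" using hazard_rate_nonneg[of f \<alpha> 0, OF f_nonneg] hazard[of 0] by linarith
  \<comment> \<open>Where \<open>1 - F = 0\<close> the hazard rate is the junk value \<open>x / 0 = 0\<close> and bounds nothing.\<close>
  have surv_y: "0 < 1 - cdf_of f y" using unbounded_right[of y] by simp
  interpret prob_space "Zdist f" by fact
  have "cdf_of f a \<le> cdf_of f y"
    unfolding cdf_of_def using y(2) by (intro finite_measure_mono) auto
  then have surv_mono: "(1 - cdf_of f y) powr (1 - \<alpha>) \<le> (1 - cdf_of f a) powr (1 - \<alpha>)"
    using surv_y alpha by (intro powr_mono2) auto
  have "abs_pow y \<alpha> = \<bar>y\<bar> powr \<alpha>" using y by (simp add: abs_pow_def)
  then have "f y * \<bar>y\<bar> powr \<alpha> \<le> C * (1 - cdf_of f y) powr (1 - \<alpha>)"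
    using hazard[of y] surv_y by (simp add: hazard_rate_def divide_le_eq)
  also have "\<dots> \<le> C * (1 - cdf_of f a) powr (1 - \<alpha>)"
    using surv_mono C by (rule mult_left_mono)
  finally have "f y * \<bar>y\<bar> powr \<alpha> * \<bar>y\<bar> powr (- \<alpha>) \<le> C * (1 - cdf_of f a) powr (1 - \<alpha>) * \<bar>y\<bar> powr (- \<alpha>)"
    by (rule mult_right_mono) simp
  moreover have "\<bar>y\<bar> powr \<alpha> * \<bar>y\<bar> powr (- \<alpha>) = 1"
    using y by (simp add: powr_add[symmetric])
  ultimately show ?thesis by (simp add: mult.assoc)
qed

text \<open>
  The part of the interval right of \<open>0\<close> is dominated by a translate of \<open>u powr -\<alpha>\<close> on
  \<open>[0, r]\<close>, the part left of \<open>0\<close> by a reflection of it.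
\<close>
lemma indicator_abs_powr_le_split:
  fixes a r \<alpha> y :: real
  assumes r: "0 \<le> r" and alpha: "0 \<le> \<alpha>"
  shows "indicator {a<..<a+r} y * \<bar>y\<bar> powr (- \<alpha>)
      \<le> indicator {0..r} (y - max a 0) * (y - max a 0) powr (- \<alpha>)
        + indicator {0..r} (min (a + r) 0 - y) * (min (a + r) 0 - y) powr (- \<alpha>)"
proof (cases "y \<in> {a<..<a+r} \<and> y \<noteq> 0")
  case y: True
  consider "0 < y" | "y < 0" using y by linarith
  then show ?thesis
  proof cases
    case 1
    then have "\<bar>y\<bar> powr (- \<alpha>) \<le> (y - max a 0) powr (- \<alpha>)" "y - max a 0 \<in> {0..r}"
      using y alpha r by (auto intro!: powr_mono2')
    then show ?thesis using y by (auto simp: indicator_def intro: add_increasing2)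
  next
    case 2
    then have "\<bar>y\<bar> powr (- \<alpha>) \<le> (min (a + r) 0 - y) powr (- \<alpha>)" "min (a + r) 0 - y \<in> {0..r}"
      using y alpha r by (auto intro!: powr_mono2')
    then show ?thesis using y by (auto simp: indicator_def intro: add_increasing)
  qed
qed (auto simp: indicator_def)

lemma nn_integral_interval_abs_powr_le:
  fixes a r \<alpha> :: real
  assumes r: "0 \<le> r" and alpha: "0 \<le> \<alpha>" "\<alpha> < 1"
  shows "(\<integral>\<^sup>+ y. ennreal (indicator {a<..<a+r} y * \<bar>y\<bar> powr (- \<alpha>)) \<partial>lborel)
           \<le> ennreal (2 * r powr (1 - \<alpha>) / (1 - \<alpha>))"
proof -
  define h where "h u = ennreal (indicator {0..r} u * u powr (- \<alpha>))" for u :: real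
  have h_meas [measurable]: "h \<in> borel_measurable borel" unfolding h_def by measurable
  have "((\<lambda>u. u powr (- \<alpha>)) has_integral (r powr (- \<alpha> + 1) / (- \<alpha> + 1))) {0..r}"
    using r alpha by (intro has_integral_powr_from_0) auto
  then have int_h: "(\<integral>\<^sup>+ u. h u \<partial>lborel) = ennreal (r powr (1 - \<alpha>) / (1 - \<alpha>))"
    unfolding h_def by (subst nn_integral_has_integral_lebesgue) (simp_all add: algebra_simps)
  have split: "ennreal (indicator {a<..<a+r} y * \<bar>y\<bar> powr (- \<alpha>))
      \<le> h (y - max a 0) + h (min (a + r) 0 - y)" for y
    using indicator_abs_powr_le_split[OF r alpha(1), of a y] unfolding h_def
    by (simp add: ennreal_plus[symmetric] ennreal_leI del: ennreal_plus)
  have "(\<integral>\<^sup>+ y. ennreal (indicator {a<..<a+r} y * \<bar>y\<bar> powr (- \<alpha>)) \<partial>lborel)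
      \<le> (\<integral>\<^sup>+ y. h (y - max a 0) + h (min (a + r) 0 - y) \<partial>lborel)"
    by (intro nn_integral_mono split)
  also have "\<dots> = (\<integral>\<^sup>+ y. h (y - max a 0) \<partial>lborel) + (\<integral>\<^sup>+ y. h (min (a + r) 0 - y) \<partial>lborel)"
    by (rule nn_integral_add) measurable
  also have "(\<integral>\<^sup>+ y. h (y - max a 0) \<partial>lborel) = (\<integral>\<^sup>+ u. h u \<partial>lborel)"
    using nn_integral_real_affine[OF h_meas, of 1 "- max a 0"] by simp
  also have "(\<integral>\<^sup>+ y. h (min (a + r) 0 - y) \<partial>lborel) = (\<integral>\<^sup>+ u. h u \<partial>lborel)"
    using nn_integral_real_affine[OF h_meas, of "-1" "min (a + r) 0"] by simp
  finally show ?thesis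
    using alpha r by (simp add: int_h ennreal_plus[symmetric] del: ennreal_plus)
qed

lemma measure_Zdist_interval_le:
  assumes f_meas: "f \<in> borel_measurable lborel"
    and f_nonneg: "\<And>x. f x \<ge> 0"
    and f_prob: "prob_space (Zdist f)"
    and unbounded_right: "\<And>z. cdf_of f z < 1"
    and alpha: "0 \<le> \<alpha>" "\<alpha> < 1"
    and hazard: "\<And>z. hazard_rate f \<alpha> z \<le> C"
    and r: "0 \<le> r"
  shows "measure (Zdist f) {a<..a+r}
           \<le> 2 * C / (1 - \<alpha>) * r powr (1 - \<alpha>) * measure (Zdist f) {a<..} powr (1 - \<alpha>)"
proof -
  have C: "0 \<le> C" using hazard_rate_nonneg[of f \<alpha> 0, OF f_nonneg] hazard[of 0] by linarith
  define K where "K = C * (1 - cdf_of f a) powr (1 - \<alpha>)"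
  have K: "0 \<le> K" unfolding K_def using C by simp
  have density_le: "AE y in lborel. ennreal (f y) * indicator {a<..a+r} y
      \<le> ennreal K * ennreal (indicator {a<..<a+r} y * \<bar>y\<bar> powr (- \<alpha>))"
    using AE_lborel_singleton[of 0] AE_lborel_singleton[of "a + r"]
  proof eventually_elim
    case (elim y)
    then have "y \<in> {a<..<a+r} \<Longrightarrow> f y \<le> K * \<bar>y\<bar> powr (- \<alpha>)"
      unfolding K_def using density_le_hazard_bound[OF f_nonneg f_prob unbounded_right _ hazard]
        alpha by auto
    then show ?case
      using K elim by (cases "y \<in> {a<..<a+r}") (auto simp: ennreal_mult[symmetric] ennreal_leI)
  qed
  have "emeasure (Zdist f) {a<..a+r} = (\<integral>\<^sup>+ y. ennreal (f y) * indicator {a<..a+r} y \<partial>lborel)"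
    unfolding Zdist_def using f_meas by (subst emeasure_density) auto
  also have "\<dots> \<le> (\<integral>\<^sup>+ y. ennreal K * ennreal (indicator {a<..<a+r} y * \<bar>y\<bar> powr (- \<alpha>)) \<partial>lborel)"
    by (rule nn_integral_mono_AE[OF density_le])
  also have "\<dots> = ennreal K * (\<integral>\<^sup>+ y. ennreal (indicator {a<..<a+r} y * \<bar>y\<bar> powr (- \<alpha>)) \<partial>lborel)"
    by (rule nn_integral_cmult) measurable
  also have "\<dots> \<le> ennreal K * ennreal (2 * r powr (1 - \<alpha>) / (1 - \<alpha>))"
    by (intro mult_left_mono nn_integral_interval_abs_powr_le r alpha) simp
  also have "\<dots> = ennreal (2 * C / (1 - \<alpha>) * r powr (1 - \<alpha>) * measure (Zdist f) {a<..} powr (1 - \<alpha>))"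
    using K alpha by (simp add: K_def survival_eq_measure[OF f_prob] ennreal_mult[symmetric] mult_ac)
  finally show ?thesis
    using C alpha by (simp add: finite_measure.emeasure_eq_measure[OF prob_space.finite_measure[OF f_prob]])
qed

lemma borel_measurable_measure_greaterThan:
  fixes M :: "real measure"
  assumes "finite_measure M" "sets M = sets borel"
  shows "(\<lambda>a. measure M {a<..}) \<in> borel_measurable borel"
proof -
  have "mono (\<lambda>a. - measure M {a<..})"
  proof (rule monoI)
    fix a b :: real assume "a \<le> b"
    then have "measure M {b<..} \<le> measure M {a<..}"
      using assms by (intro finite_measure.finite_measure_mono) auto
    then show "- measure M {a<..} \<le> - measure M {b<..}" by simp
  qed
  then have "(\<lambda>a. - (- measure M {a<..})) \<in> borel_measurable borel"
    by (intro borel_measurable_uminus borel_measurable_mono)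
  then show ?thesis by simp
qed

lemma prob_space_Zjoint: "prob_space (Zdist f) \<Longrightarrow> prob_space (Zjoint f N)"
  unfolding Zjoint_def by (rule prob_space_PiM) auto

lemma borel_measurable_Zjoint_component: "k < N \<Longrightarrow> (\<lambda>\<omega>. \<omega> k) \<in> borel_measurable (Zjoint f N)"
  unfolding Zjoint_def by measurable

lemma integrable_Zjoint_component:
  assumes f_prob: "prob_space (Zdist f)" and finite_mean: "integrable (Zdist f) (\<lambda>x. x)"
    and k: "k < N"
  shows "integrable (Zjoint f N) (\<lambda>\<omega>. \<omega> k)"
proof -
  have distr: "distr (Zjoint f N) (Zdist f) (\<lambda>\<omega>. \<omega> k) = Zdist f"
    unfolding Zjoint_def by (rule distr_PiM_component) (use f_prob k in auto)
  have "(\<lambda>\<omega>. \<omega> k) \<in> measurable (Zjoint f N) (Zdist f)"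
    unfolding Zjoint_def by (rule measurable_component_singleton) (use k in auto)
  from integrable_distr_eq[OF this, of "\<lambda>x. x"] show ?thesis
    using finite_mean unfolding distr by simp
qed

lemma integrable_Zjoint_Max:
  assumes f_prob: "prob_space (Zdist f)" and finite_mean: "integrable (Zdist f) (\<lambda>x. x)"
    and N: "0 < N"
  shows "integrable (Zjoint f N) (\<lambda>\<omega>. Max ((\<lambda>j. G j + \<omega> j) ` {..<N}))"
proof (rule Bochner_Integration.integrable_bound)
  interpret prob_space "Zjoint f N" using f_prob by (rule prob_space_Zjoint)
  show "integrable (Zjoint f N) (\<lambda>\<omega>. \<Sum>j<N. \<bar>G j\<bar> + \<bar>\<omega> j\<bar>)"
    by (intro Bochner_Integration.integrable_sum Bochner_Integration.integrable_add
        integrable_const Bochner_Integration.integrable_abs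
        integrable_Zjoint_component[OF f_prob finite_mean]) simp
  show "(\<lambda>\<omega>. Max ((\<lambda>j. G j + \<omega> j) ` {..<N})) \<in> borel_measurable (Zjoint f N)"
    by (intro borel_measurable_Max borel_measurable_add borel_measurable_const
        borel_measurable_Zjoint_component) simp_all
  show "AE \<omega> in Zjoint f N. norm (Max ((\<lambda>j. G j + \<omega> j) ` {..<N})) \<le> norm (\<Sum>j<N. \<bar>G j\<bar> + \<bar>\<omega> j\<bar>)"
  proof (rule AE_I2)
    fix \<omega>
    have "Max ((\<lambda>j. G j + \<omega> j) ` {..<N}) \<in> (\<lambda>j. G j + \<omega> j) ` {..<N}"
      using N by (intro Max_in) auto
    then obtain j where j: "j < N" "Max ((\<lambda>j. G j + \<omega> j) ` {..<N}) = G j + \<omega> j"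
      by auto
    have "\<bar>G j + \<omega> j\<bar> \<le> (\<Sum>j<N. \<bar>G j\<bar> + \<bar>\<omega> j\<bar>)"
      using j(1) member_le_sum[of j "{..<N}" "\<lambda>j. \<bar>G j\<bar> + \<bar>\<omega> j\<bar>"] by auto
    then show "norm (Max ((\<lambda>j. G j + \<omega> j) ` {..<N})) \<le> norm (\<Sum>j<N. \<bar>G j\<bar> + \<bar>\<omega> j\<bar>)"
      using j(2) by (simp add: sum_nonneg)
  qed
qed

definition lead_event :: "(real \<Rightarrow> real) \<Rightarrow> nat \<Rightarrow> (nat \<Rightarrow> real) \<Rightarrow> nat \<Rightarrow> real \<Rightarrow> (nat \<Rightarrow> real) set"
  where "lead_event f N G i r = {\<omega> \<in> space (Zjoint f N). \<forall>j<N. j \<noteq> i \<longrightarrow> G j + \<omega> j + r < G i + \<omega> i}"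

lemma sets_lead_event: "i < N \<Longrightarrow> lead_event f N G i r \<in> sets (Zjoint f N)"
  unfolding lead_event_def Zjoint_def by measurable

lemma grad_eq_measure_lead_event: "grad f N G i = measure (Zjoint f N) (lead_event f N G i 0)"
  by (simp add: grad_def lead_event_def)

lemma lead_event_antimono: "r \<le> s \<Longrightarrow> lead_event f N G i s \<subseteq> lead_event f N G i r"
  unfolding lead_event_def by fastforce

lemma Max_update_minus_le:
  fixes G w :: "'a \<Rightarrow> real"
  assumes I: "finite I" "i \<in> I" and r: "0 \<le> r"
  shows "Max ((\<lambda>j. (G(i := G i - r)) j + w j) ` I)
      \<le> Max ((\<lambda>j. G j + w j) ` I) - (if \<forall>j\<in>I. j \<noteq> i \<longrightarrow> G j + w j + r < G i + w i then r else 0)"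
proof -
  have le_Max: "G j + w j \<le> Max ((\<lambda>j. G j + w j) ` I)" if "j \<in> I" for j
    using I that by (intro Max_ge) auto
  show ?thesis
  proof (cases "\<forall>j\<in>I. j \<noteq> i \<longrightarrow> G j + w j + r < G i + w i")
    case True
    then have "Max ((\<lambda>j. (G(i := G i - r)) j + w j) ` I) \<le> G i + w i - r"
      using I by (intro Max.boundedI) auto
    with True le_Max[OF I(2)] show ?thesis by simp
  next
    case False
    have "(G(i := G i - r)) j + w j \<le> Max ((\<lambda>j. G j + w j) ` I)" if "j \<in> I" for j
      using le_Max[OF that] r by (cases "j = i") auto
    then have "Max ((\<lambda>j. (G(i := G i - r)) j + w j) ` I) \<le> Max ((\<lambda>j. G j + w j) ` I)"
      using I by (intro Max.boundedI) auto
    then show ?thesis by (simp only: if_not_P[OF False] diff_zero)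
  qed
qed

lemma Phi_update_minus_le:
  assumes f_prob: "prob_space (Zdist f)" and finite_mean: "integrable (Zdist f) (\<lambda>x. x)"
    and i: "i < N" and r: "0 \<le> r"
  shows "Phi f N (G(i := G i - r)) - Phi f N G \<le> - r * measure (Zjoint f N) (lead_event f N G i r)"
proof -
  interpret prob_space "Zjoint f N" using f_prob by (rule prob_space_Zjoint)
  let ?E = "lead_event f N G i r"
  have E: "?E \<in> sets (Zjoint f N)" using i by (rule sets_lead_event)
  have int_Max: "integrable (Zjoint f N) (\<lambda>\<omega>. Max ((\<lambda>j. H j + \<omega> j) ` {..<N}))" for H
    using i by (intro integrable_Zjoint_Max[OF f_prob finite_mean]) simp
  have "Phi f N (G(i := G i - r)) - Phi f N G
      = (\<integral>\<omega>. Max ((\<lambda>j. (G(i := G i - r)) j + \<omega> j) ` {..<N}) - Max ((\<lambda>j. G j + \<omega> j) ` {..<N}) \<partial>Zjoint f N)"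
    unfolding Phi_def by (rule Bochner_Integration.integral_diff[OF int_Max int_Max, symmetric])
  also have "\<dots> \<le> (\<integral>\<omega>. - r * indicator ?E \<omega> \<partial>Zjoint f N)"
  proof (intro integral_mono Bochner_Integration.integrable_diff int_Max
      integrable_mult_right integrable_real_indicator E)
    fix \<omega> assume "\<omega> \<in> space (Zjoint f N)"
    then show "Max ((\<lambda>j. (G(i := G i - r)) j + \<omega> j) ` {..<N}) - Max ((\<lambda>j. G j + \<omega> j) ` {..<N})
        \<le> - r * indicator ?E \<omega>"
      using Max_update_minus_le[of "{..<N}" i r G \<omega>] i r
      by (auto simp: lead_event_def indicator_def split: if_splits)
  qed (use emeasure_finite in \<open>simp add: less_top[symmetric]\<close>)
  also have "\<dots> = - r * measure (Zjoint f N) ?E"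
    using E by simp
  finally show ?thesis .
qed

lemma bregman_update_minus_le:
  assumes f_prob: "prob_space (Zdist f)" and finite_mean: "integrable (Zdist f) (\<lambda>x. x)"
    and i: "i < N" and r: "0 \<le> r"
  shows "bregman f N (G(i := G i - r)) G
      \<le> r * measure (Zjoint f N) (lead_event f N G i 0 - lead_event f N G i r)"
proof -
  interpret prob_space "Zjoint f N" using f_prob by (rule prob_space_Zjoint)
  have "(\<Sum>j<N. grad f N G j * ((G(i := G i - r)) j - G j)) = (\<Sum>j<N. if j = i then - r * grad f N G i else 0)"
    by (intro sum.cong) auto
  then have "bregman f N (G(i := G i - r)) G = Phi f N (G(i := G i - r)) - Phi f N G + r * grad f N G i"
    using i by (simp add: bregman_def)
  also have "\<dots> \<le> r * (measure (Zjoint f N) (lead_event f N G i 0) - measure (Zjoint f N) (lead_event f N G i r))"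
    using Phi_update_minus_le[OF f_prob finite_mean i r, of G]
    by (simp add: grad_eq_measure_lead_event algebra_simps)
  also have "\<dots> = r * measure (Zjoint f N) (lead_event f N G i 0 - lead_event f N G i r)"
    using i r by (simp add: finite_measure_Diff sets_lead_event lead_event_antimono)
  finally show ?thesis .
qed

lemma nn_integral_powr_le_powr_nn_integral:
  assumes M: "prob_space M" and h: "h \<in> borel_measurable M" "\<And>x. x \<in> space M \<Longrightarrow> 0 \<le> h x"
    and p: "(\<integral>\<^sup>+ x. ennreal (h x) \<partial>M) = ennreal p" "0 \<le> p"
    and \<beta>: "0 \<le> \<beta>" "\<beta> \<le> 1"
  shows "(\<integral>\<^sup>+ x. ennreal (h x powr \<beta>) \<partial>M) \<le> ennreal (p powr \<beta>)"
proof (cases "p = 0")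
  case True
  then have "AE x in M. ennreal (h x) = 0"
    using p(1) h(1) by (simp add: nn_integral_0_iff_AE)
  then have "AE x in M. ennreal (h x powr \<beta>) = 0"
    by (rule AE_mp) (simp add: AE_I2 h(2))
  then have "(\<integral>\<^sup>+ x. ennreal (h x powr \<beta>) \<partial>M) = (\<integral>\<^sup>+ x. 0 \<partial>M)"
    by (rule nn_integral_cong_AE)
  then show ?thesis by simp
next
  case False
  interpret prob_space M by fact
  have p_pos: "0 < p" using False p(2) by simp
  define c d where "c = \<beta> * p powr (\<beta> - 1)" and "d = (1 - \<beta>) * p powr \<beta>"
  have c: "0 \<le> c" and d: "0 \<le> d" using \<beta> by (simp_all add: c_def d_def)
  \<comment> \<open>Young's inequality is the tangent-line bound for the concave function \<open>t \<mapsto> t^\<beta>\<close> at \<open>p\<close>.\<close>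
  have tangent: "h x powr \<beta> \<le> c * h x + d" if "x \<in> space M" for x
  proof (cases "h x = 0")
    case False
    then have "h x powr \<beta> * p powr (1 - \<beta>) \<le> \<beta> * h x + (1 - \<beta>) * p"
      using h(2)[OF that] p_pos \<beta> by (intro Youngs_inequality_0) auto
    then have "p powr (\<beta> - 1) * (h x powr \<beta> * p powr (1 - \<beta>)) \<le> p powr (\<beta> - 1) * (\<beta> * h x + (1 - \<beta>) * p)"
      by (rule mult_left_mono) simp
    then show ?thesis
      using p_pos by (simp add: c_def d_def algebra_simps powr_add[symmetric] powr_mult_base)
  qed (use c d in simp)
  have "(\<integral>\<^sup>+ x. ennreal (h x powr \<beta>) \<partial>M) \<le> (\<integral>\<^sup>+ x. ennreal c * ennreal (h x) + ennreal d \<partial>M)"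
    using tangent c d h(2) by (intro nn_integral_mono) (simp add: ennreal_mult[symmetric] ennreal_plus[symmetric] del: ennreal_plus)
  also have "\<dots> = ennreal c * ennreal p + ennreal d"
    using h(1) p(1) by (simp add: nn_integral_add nn_integral_cmult emeasure_space_1)
  also have "\<dots> = ennreal (p powr \<beta>)"
    using c d p_pos \<beta> by (simp add: c_def d_def ennreal_mult[symmetric] ennreal_plus[symmetric] powr_mult_base
        algebra_simps powr_add[symmetric] del: ennreal_plus)
  finally show ?thesis .
qed

lemma emeasure_Zjoint_by_coordinate:
  assumes f_prob: "prob_space (Zdist f)" and i: "i < N" and B: "B \<in> sets (Zjoint f N)"
    and S: "\<And>x. S x \<in> sets borel"
    and slice: "\<And>x y. x \<in> space (PiM ({..<N} - {i}) (\<lambda>_. Zdist f)) \<Longrightarrow> x(i := y) \<in> B \<longleftrightarrow> y \<in> S x"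
  shows "emeasure (Zjoint f N) B = (\<integral>\<^sup>+ x. emeasure (Zdist f) (S x) \<partial>PiM ({..<N} - {i}) (\<lambda>_. Zdist f))"
proof -
  interpret product_prob_space "\<lambda>_. Zdist f" "{..<N}"
    by (rule product_prob_spaceI) (use f_prob in auto)
  have Zjoint: "Zjoint f N = PiM (insert i ({..<N} - {i})) (\<lambda>_. Zdist f)"
    unfolding Zjoint_def using i by (simp add: insert_absorb)
  have "emeasure (Zjoint f N) B = (\<integral>\<^sup>+ \<omega>. indicator B \<omega> \<partial>Zjoint f N)"
    using B by simp
  also have "\<dots> = (\<integral>\<^sup>+ x. (\<integral>\<^sup>+ y. indicator B (x(i := y)) \<partial>Zdist f) \<partial>PiM ({..<N} - {i}) (\<lambda>_. Zdist f))"
    unfolding Zjoint using B[unfolded Zjoint] by (intro product_nn_integral_insert) auto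
  also have "\<dots> = (\<integral>\<^sup>+ x. emeasure (Zdist f) (S x) \<partial>PiM ({..<N} - {i}) (\<lambda>_. Zdist f))"
  proof (intro nn_integral_cong)
    fix x assume "x \<in> space (PiM ({..<N} - {i}) (\<lambda>_. Zdist f))"
    then have "(\<lambda>y. indicator B (x(i := y)) :: ennreal) = indicator (S x)"
      by (auto simp: indicator_def slice)
    then show "(\<integral>\<^sup>+ y. indicator B (x(i := y)) \<partial>Zdist f) = emeasure (Zdist f) (S x)"
      using S by simp
  qed
  finally show ?thesis .
qed

lemma lead_event_update_iff:
  assumes others: "{..<N} - {i} \<noteq> {}" and i: "i < N"
    and x: "x \<in> space (PiM ({..<N} - {i}) (\<lambda>_. Zdist f))"
  shows "x(i := y) \<in> lead_event f N G i r \<longleftrightarrow> Max ((\<lambda>j. G j + x j) ` ({..<N} - {i})) - G i + r < y"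
proof -
  have "x(i := y) \<in> space (Zjoint f N)"
    using x i unfolding Zjoint_def by (auto simp: space_PiM PiE_def extensional_def)
  then have "x(i := y) \<in> lead_event f N G i r \<longleftrightarrow> (\<forall>j \<in> {..<N} - {i}. G j + x j < G i + y - r)"
    unfolding lead_event_def by (auto simp: less_diff_eq)
  also have "\<dots> \<longleftrightarrow> Max ((\<lambda>j. G j + x j) ` ({..<N} - {i})) < G i + y - r"
    using others by (subst Max_less_iff) auto
  finally show ?thesis by linarith
qed

lemma measure_lead_gap_le:
  assumes f_prob: "prob_space (Zdist f)" and i: "i < N"
    and \<beta>: "0 \<le> \<beta>" "\<beta> \<le> 1" and K: "0 \<le> K"
    and interval: "\<And>a. measure (Zdist f) {a<..a+r} \<le> K * measure (Zdist f) {a<..} powr \<beta>"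
  shows "measure (Zjoint f N) (lead_event f N G i 0 - lead_event f N G i r)
      \<le> K * measure (Zjoint f N) (lead_event f N G i 0) powr \<beta>"
proof (cases "{..<N} - {i} = {}")
  case True
  then have empty: "lead_event f N G i 0 - lead_event f N G i r = {}"
    unfolding lead_event_def by auto
  show ?thesis unfolding empty using K by simp
next
  case False
  interpret Z: prob_space "Zdist f" by fact
  interpret P: prob_space "Zjoint f N" using f_prob by (rule prob_space_Zjoint)
  define I where "I = {..<N} - {i}"
  define m where "m x = Max ((\<lambda>j. G j + x j) ` I) - G i" for x
  define S where "S a = measure (Zdist f) {a<..}" for a
  have x_in: "x(i := y) \<in> lead_event f N G i s \<longleftrightarrow> m x + s < y"
    if "x \<in> space (PiM I (\<lambda>_. Zdist f))" for x y s
    using lead_event_update_iff[OF False i] that unfolding I_def m_def by blast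
  have lead_sets: "lead_event f N G i r \<in> sets (Zjoint f N)" for r
    using i by (rule sets_lead_event)
  have "S \<in> borel_measurable borel"
    unfolding S_def using Z.finite_measure_axioms by (intro borel_measurable_measure_greaterThan) simp_all
  moreover have "m \<in> borel_measurable (PiM I (\<lambda>_. Zdist f))"
    unfolding m_def by (intro borel_measurable_diff borel_measurable_Max borel_measurable_add
        borel_measurable_const measurable_component_singleton) (auto simp: I_def)
  ultimately have S_meas: "(\<lambda>x. S (m x)) \<in> borel_measurable (PiM I (\<lambda>_. Zdist f))"
    by (simp add: measurable_compose)
  have "emeasure (Zjoint f N) (lead_event f N G i 0) = (\<integral>\<^sup>+ x. emeasure (Zdist f) {m x<..} \<partial>PiM I (\<lambda>_. Zdist f))"
    unfolding I_def using x_in[of _ _ 0] by (intro emeasure_Zjoint_by_coordinate f_prob i lead_sets)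
      (auto simp: I_def)
  then have lead: "(\<integral>\<^sup>+ x. ennreal (S (m x)) \<partial>PiM I (\<lambda>_. Zdist f))
      = ennreal (measure (Zjoint f N) (lead_event f N G i 0))"
    by (simp add: S_def Z.emeasure_eq_measure P.emeasure_eq_measure)
  have "ennreal (measure (Zjoint f N) (lead_event f N G i 0 - lead_event f N G i r))
      = (\<integral>\<^sup>+ x. emeasure (Zdist f) {m x<..m x + r} \<partial>PiM I (\<lambda>_. Zdist f))"
    unfolding P.emeasure_eq_measure[symmetric] I_def
    using x_in by (intro emeasure_Zjoint_by_coordinate f_prob i sets.Diff lead_sets)
      (auto simp: I_def)
  also have "\<dots> \<le> (\<integral>\<^sup>+ x. ennreal K * ennreal (S (m x) powr \<beta>) \<partial>PiM I (\<lambda>_. Zdist f))"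
    using interval K by (intro nn_integral_mono)
      (simp add: S_def Z.emeasure_eq_measure ennreal_mult[symmetric] ennreal_leI)
  also have "\<dots> = ennreal K * (\<integral>\<^sup>+ x. ennreal (S (m x) powr \<beta>) \<partial>PiM I (\<lambda>_. Zdist f))"
    using S_meas by (intro nn_integral_cmult) simp
  also have "\<dots> \<le> ennreal K * ennreal (measure (Zjoint f N) (lead_event f N G i 0) powr \<beta>)"
    using f_prob S_meas lead \<beta>
    by (intro mult_left_mono nn_integral_powr_le_powr_nn_integral prob_space_PiM)
      (auto simp: S_def)
  finally show ?thesis
    using K by (simp add: ennreal_mult[symmetric])
qed

lemma weighted_bregman_le:
  assumes f_meas: "f \<in> borel_measurable lborel"
    and f_nonneg: "\<And>x. f x \<ge> 0"
    and f_prob: "prob_space (Zdist f)"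
    and finite_mean: "integrable (Zdist f) (\<lambda>x. x)"
    and unbounded_right: "\<And>z. cdf_of f z < 1"
    and alpha: "0 \<le> \<alpha>" "\<alpha> < 1"
    and hazard: "\<And>z. hazard_rate f \<alpha> z \<le> C"
    and i: "i < N" and gain: "-1 \<le> g" "g \<le> 0"
  shows "grad f N G i * bregman f N (G(i := G i + g / grad f N G i)) G \<le> 2 * C / (1 - \<alpha>)"
proof -
  define B where "B = 2 * C / (1 - \<alpha>)"
  define p where "p = grad f N G i"
  define r where "r = - g / p"
  have B: "0 \<le> B"
    unfolding B_def using hazard_rate_nonneg[of f \<alpha> 0, OF f_nonneg] hazard[of 0] alpha by simp
  have p: "0 \<le> p"
    unfolding p_def grad_eq_measure_lead_event by simp
  show ?thesis
  proof (cases "p = 0")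
    case True
    then show ?thesis using B by (simp add: B_def p_def)
  next
    case False
    then have p_pos: "0 < p" using p by simp
    have r: "0 \<le> r" unfolding r_def using gain p_pos by (simp add: divide_nonpos_pos)
    have rp: "r * p = - g" unfolding r_def using p_pos by simp
    have interval: "measure (Zdist f) {a<..a+r}
        \<le> B * r powr (1 - \<alpha>) * measure (Zdist f) {a<..} powr (1 - \<alpha>)" for a
      unfolding B_def
      by (rule measure_Zdist_interval_le[OF f_meas f_nonneg f_prob unbounded_right alpha hazard r])
    have "measure (Zjoint f N) (lead_event f N G i 0 - lead_event f N G i r)
        \<le> B * r powr (1 - \<alpha>) * p powr (1 - \<alpha>)"
      unfolding p_def grad_eq_measure_lead_event using alpha B
      by (intro measure_lead_gap_le f_prob i interval) simp_all
    then have "p * bregman f N (G(i := G i - r)) G \<le> p * (r * (B * r powr (1 - \<alpha>) * p powr (1 - \<alpha>)))"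
      using bregman_update_minus_le[OF f_prob finite_mean i r, of G] p r
      by (intro mult_left_mono) (auto intro: order_trans mult_left_mono)
    also have "\<dots> = B * ((r * p) * (r * p) powr (1 - \<alpha>))"
      using r p by (simp add: powr_mult mult_ac)
    also have "\<dots> = B * ((- g) * (- g) powr (1 - \<alpha>))"
      by (simp only: rp)
    also have "\<dots> \<le> B"
      using gain alpha B by (intro mult_right_le_one_le mult_le_one) (auto intro: powr_le1 simp: mult_nonpos_nonneg)
    finally show ?thesis
      using rp p_pos by (simp add: B_def p_def r_def)
  qed
qed

theorem theorem2:
  fixes f :: "real \<Rightarrow> real" and \<alpha> C :: real and N T t :: nat
    and g :: "nat \<Rightarrow> nat \<Rightarrow> real" and hs :: "nat list"
  assumes f_meas: "f \<in> borel_measurable lborel"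
    and f_nonneg: "\<And>x. f x \<ge> 0"
    and f_prob: "prob_space (Zdist f)"
    and finite_mean: "integrable (Zdist f) (\<lambda>x. x)"
    and unbounded_right: "\<And>z. cdf_of f z < 1"
    and alpha: "0 \<le> \<alpha>" "\<alpha> < 1"
    and hazard: "\<And>z. hazard_rate f \<alpha> z \<le> C"
    and N: "N \<ge> 1"
    and gains: "\<And>s i. s \<in> {1..T} \<Longrightarrow> i < N \<Longrightarrow> -1 \<le> g s i \<and> g s i \<le> 0"
    and t: "1 \<le> t" "t \<le> T"
    and hist: "length hs = t - 1" "set hs \<subseteq> {..<N}" "hist_prob f N g hs > 0"
  shows "cond_exp_bregman f N g t hs \<le> 2 * C / (1 - \<alpha>) * real N"
  \<comment> \<open>The bound is uniform in the history.\<close>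
proof -
  define G where "G = Ghat f N g hs (t - 1)"
  have "cond_exp_bregman f N g t hs
      = (\<Sum>i<N. grad f N G i * bregman f N (G(i := G i + g t i / grad f N G i)) G)"
    unfolding cond_exp_bregman_def G_def Let_def ..
  also have "\<dots> \<le> (\<Sum>i<N. 2 * C / (1 - \<alpha>))"
    using gains[of t] t
    by (intro sum_mono weighted_bregman_le[OF f_meas f_nonneg f_prob finite_mean unbounded_right
        alpha hazard]) auto
  finally show ?thesis by (simp add: mult.commute)
qed

end
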